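(* Consider a family, indexed by integers $m\ge 2$, of normalized $2^m$-APSK constellations $\mathcal{X}_m$ with $K_m$ rings, and let $\mathsf{X}$ (depending on $m$) be uniformly distributed over $\mathcal{X}_m$. Suppose that, with all implied constants independent of $m$ and $k$: (1) the number of rings satisfies $K_m=\Theta(\sqrt{2^m})$; (2) the pre-normalization radii $\widetilde r_1,\dots,\widetilde r_{K_m}$ satisfy $\widetilde r_k=\Theta(k/\sqrt{2^m})$ for $1\le k\le K_m$ and $\widetilde r_{k+1}-\widetilde r_k=\Theta(1/\sqrt{2^m})$ for $1\le k\le K_m-1$; (3) the numbers of points per ring are $N_k=a_m k$ for $1\le k\le K_m-1$ and $N_{K_m}=2^m-\sum_{i=1}^{K_m-1}N_i$, where the positive integer $a_m$ is chosen so that $N_{K_m}>0$ and $N_{K_m}=\Theta(K_m)$; (4) the phase offsets are aligned across rings: $\phi_{k+1}-\phi_k=0$ for $1\le k\le K_m-1$. Then $d_{\min}^2(\mathsf{X})=\Theta(2^{-m})$.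
   Context: A $2^m$-APSK constellation ($m\ge 2$) with $K_m$ rings is a set $$\mathcal{X}=\bigcup_{k=1}^{K_m}\left\{ r_k e^{j(\phi_k+2\pi n/N_k)} : n=0,1,\dots,N_k-1\right\}\subset\mathbb{C},$$ where $N_k\ge1$ is the number of points on ring $k$, $\sum_k N_k=2^m$, $r_k>0$ the ring radius and $\phi_k$ the phase offset. The normalized radii are obtained from pre-normalization radii $\widetilde r_k$ by $r_k=\widetilde r_k/\sqrt{E_0}$ with $E_0=\frac{1}{2^m}\sum_{k=1}^{K_m}N_k\widetilde r_k^2$, so that $\frac{1}{2^m}\sum_{x\in\mathcal{X}}|x|^2=1$. For $\mathsf{X}$ uniform on $\mathcal{X}$, $d_{\min}(\mathsf{X})$ is the minimum Euclidean distance between distinct points of $\mathcal{X}$. The notation $f=\Theta(g)$ means $c_1 g\le f\le c_2 g$ for positive constants $c_1,c_2$ independent of $m$ (and $k$). *)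

theory Defs
  imports "HOL-Analysis.Analysis"
begin

definition apsk :: "nat \<Rightarrow> (nat \<Rightarrow> nat) \<Rightarrow> (nat \<Rightarrow> real) \<Rightarrow> (nat \<Rightarrow> real) \<Rightarrow> complex set" where
  "apsk K N r phi =
     (\<Union>k\<in>{1..K}. {complex_of_real (r k) * cis (phi k + 2 * pi * real n / real (N k)) | n. n < N k})"

definition apsk_E0 :: "nat \<Rightarrow> nat \<Rightarrow> (nat \<Rightarrow> nat) \<Rightarrow> (nat \<Rightarrow> real) \<Rightarrow> real" where
  "apsk_E0 m K N rt = (1 / 2 ^ m) * (\<Sum>k=1..K. real (N k) * (rt k)\<^sup>2)"

definition apsk_radii :: "nat \<Rightarrow> nat \<Rightarrow> (nat \<Rightarrow> nat) \<Rightarrow> (nat \<Rightarrow> real) \<Rightarrow> nat \<Rightarrow> real" where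
  "apsk_radii m K N rt k = rt k / sqrt (apsk_E0 m K N rt)"

definition dmin :: "complex set \<Rightarrow> real" where
  "dmin X = Inf {cmod (x - y) | x y. x \<in> X \<and> y \<in> X \<and> x \<noteq> y}"

definition ring_sizes :: "nat \<Rightarrow> nat \<Rightarrow> nat \<Rightarrow> nat \<Rightarrow> nat" where
  "ring_sizes m K a k = (if k < K then a * k else 2 ^ m - (\<Sum>i=1..<K. a * i))"

end

theory Submission
  imports Defs
begin

text \<open>
  Normalisation divides all radii by sqrt E0, and E0 is bounded above and below by
  constants: with K = Theta(2^(m/2)), pre-normalisation radii Theta(k / 2^(m/2)) and
  N_k >= c k on every ring, the sum of N_k r_k^2 is of order 2^m (from below through
  the sum of k^3 being at least K^4/4).

  Points on different rings are at least one radial gap, Theta(2^(-m/2)), apart.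
  Points on ring k are at least 2 r_k / N_k apart, because |sin (pi d / N)| >= 1/N
  for 0 < |d| < N. This is again of order 2^(-m/2): on the inner rings N_k / k = a,
  which is bounded because they carry fewer than 2^m points, and on the outer ring
  N_K = Theta(K). Conversely, aligned phases put the first points of rings 1 and 2 on
  one ray, one radial gap apart; with a single ring, two neighbouring points are
  O(2^(-m)) apart.
\<close>

lemma sin_ge_x_div_3:
  fixes x :: real
  assumes "0 \<le> x" "x \<le> pi / 2"
  shows "x / 3 \<le> sin x"
proof -
  have "\<bar>sin x - (\<Sum>m<3. sin_coeff m * x ^ m)\<bar> \<le> inverse (fact 3) * \<bar>x\<bar> ^ 3"
    by (rule Maclaurin_sin_bound)
  then have taylor: "\<bar>sin x - x\<bar> * 6 \<le> x ^ 3"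
    using assms by (simp add: eval_nat_numeral sin_coeff_def fact_numeral)
  have "x\<^sup>2 \<le> 2\<^sup>2"
    using assms pi_less_4 by (intro power_mono) auto
  then have "x ^ 3 \<le> 4 * x"
    using assms mult_left_mono[of "x\<^sup>2" 4 x] by (simp add: power3_eq_cube power2_eq_square mult.commute)
  then show ?thesis
    using taylor by (simp add: abs_if split: if_splits)
qed

lemma sin_pi_div_ge:
  fixes e N :: nat
  assumes "0 < e" "e < N"
  shows "1 / real N \<le> sin (pi * real e / real N)"
proof -
  define f where "f = min e (N - e)"
  have f: "1 \<le> f" "2 * f \<le> N"
    using assms by (auto simp: f_def)
  have "sin (pi * real e / real N) = sin (pi * real f / real N)"
  proof (cases "f = e")
    case False
    then have "pi * real f / real N = pi - pi * real e / real N"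
      using assms by (simp add: f_def min_def of_nat_diff field_simps split: if_splits)
    then show ?thesis
      by simp
  qed simp
  moreover have "pi * real f / real N / 3 \<le> sin (pi * real f / real N)"
    using f by (intro sin_ge_x_div_3) (auto simp: field_simps)
  moreover have "3 \<le> pi * real f"
    using f pi_gt3 mult_left_mono[of 1 "real f" pi] by linarith
  ultimately show ?thesis
    using assms by (simp add: field_simps)
qed

lemma norm_cis_diff: "cmod (cis a - cis b) = 2 * \<bar>sin ((a - b) / 2)\<bar>"
proof -
  have "(cmod (cis a - cis b))\<^sup>2 = 2 - 2 * cos (a - b)"
    by (simp add: cmod_power2 cis.code power2_diff cos_diff algebra_simps)
  also have "\<dots> = (2 * \<bar>sin ((a - b) / 2)\<bar>)\<^sup>2"
    using cos_double_sin[of "(a - b) / 2", unfolded mult_2 field_sum_of_halves]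
    by (simp add: power_mult_distrib)
  finally show ?thesis
    by (subst (asm) power2_eq_iff_nonneg) auto
qed

lemma norm_cis_diff_le: "cmod (cis a - cis b) \<le> \<bar>a - b\<bar>"
  using abs_sin_x_le_abs_x[of "(a - b) / 2"] by (simp add: norm_cis_diff)

lemma ring_chord_ge:
  fixes N n1 n2 :: nat
  assumes "n1 < N" "n2 < N" "n1 \<noteq> n2"
  shows "2 * \<bar>r\<bar> / real N \<le> cmod (of_real r * cis (p + 2 * pi * real n1 / real N)
                                   - of_real r * cis (p + 2 * pi * real n2 / real N))"
  using assms
proof (induction n1 n2 rule: linorder_wlog)
  case (le n1 n2)
  define A where "A = p + 2 * pi * real n1 / real N"
  define B where "B = p + 2 * pi * real n2 / real N"
  have "(B - A) / 2 = pi * real (n2 - n1) / real N"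
    using le by (simp add: A_def B_def of_nat_diff field_simps)
  moreover have "1 / real N \<le> sin (pi * real (n2 - n1) / real N)"
    using le by (intro sin_pi_div_ge) auto
  ultimately have "\<bar>r\<bar> * (2 * (1 / real N)) \<le> \<bar>r\<bar> * (2 * \<bar>sin ((B - A) / 2)\<bar>)"
    by (intro mult_left_mono) auto
  also have "\<dots> = \<bar>r\<bar> * cmod (cis B - cis A)"
    by (simp only: norm_cis_diff)
  also have "\<dots> = cmod (of_real r * cis A - of_real r * cis B)"
    by (simp add: norm_mult norm_minus_commute flip: right_diff_distrib)
  finally show ?case
    by (simp add: A_def B_def mult.commute)
next
  case (sym n1 n2)
  then show ?case
    by (simp add: norm_minus_commute)
qed

lemma mem_apsk:
  "x \<in> apsk K N r phi \<longleftrightarrow>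
     (\<exists>k\<in>{1..K}. \<exists>n<N k. x = of_real (r k) * cis (phi k + 2 * pi * real n / real (N k)))"
  unfolding apsk_def by blast

lemma apsk_dist_ge:
  assumes "x \<in> apsk K N r phi" "y \<in> apsk K N r phi" "x \<noteq> y"
    and radii_nonneg: "\<And>k. k \<in> {1..K} \<Longrightarrow> 0 \<le> r k"
    and radii_sep: "\<And>j k. j \<in> {1..K} \<Longrightarrow> k \<in> {1..K} \<Longrightarrow> j \<noteq> k \<Longrightarrow> \<delta> \<le> \<bar>r j - r k\<bar>"
    and chord_sep: "\<And>k. k \<in> {1..K} \<Longrightarrow> \<delta> \<le> 2 * r k / real (N k)"
  shows "\<delta> \<le> cmod (x - y)"
proof -
  obtain j n1 where j: "j \<in> {1..K}" "n1 < N j"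
    and x: "x = of_real (r j) * cis (phi j + 2 * pi * real n1 / real (N j))"
    using assms(1) mem_apsk by blast
  obtain k n2 where k: "k \<in> {1..K}" "n2 < N k"
    and y: "y = of_real (r k) * cis (phi k + 2 * pi * real n2 / real (N k))"
    using assms(2) mem_apsk by blast
  show ?thesis
  proof (cases "j = k")
    case True
    then have "n1 \<noteq> n2"
      using x y assms(3) by auto
    then have "2 * r k / real (N k) \<le> cmod (x - y)"
      using ring_chord_ge[of n1 "N k" n2 "r k" "phi k"] j k True x y radii_nonneg[OF k(1)] by simp
    then show ?thesis
      using chord_sep[OF k(1)] by linarith
  next
    case False
    have "\<bar>r j - r k\<bar> \<le> cmod (x - y)"
      using norm_triangle_ineq3[of x y] radii_nonneg[OF j(1)] radii_nonneg[OF k(1)]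
      by (simp add: x y norm_mult)
    then show ?thesis
      using radii_sep[OF j(1) k(1) False] by linarith
  qed
qed

lemma dmin_bounds:
  assumes "x \<in> X" "y \<in> X" "x \<noteq> y"
    and "\<And>u v. u \<in> X \<Longrightarrow> v \<in> X \<Longrightarrow> u \<noteq> v \<Longrightarrow> \<delta> \<le> cmod (u - v)"
  shows "\<delta> \<le> dmin X" "dmin X \<le> cmod (x - y)"
proof -
  let ?D = "{cmod (u - v) | u v. u \<in> X \<and> v \<in> X \<and> u \<noteq> v}"
  have "cmod (x - y) \<in> ?D"
    using assms(1-3) by blast
  moreover have "bdd_below ?D"
    by (rule bdd_belowI[of _ 0]) auto
  ultimately show "\<delta> \<le> dmin X" "dmin X \<le> cmod (x - y)"
    unfolding dmin_def using assms(4) by (auto intro!: cInf_greatest cInf_lower)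
qed

lemma sum_ring_sizes:
  assumes "1 \<le> K" "(\<Sum>i=1..<K. a * i) \<le> 2 ^ m"
  shows "(\<Sum>k=1..K. ring_sizes m K a k) = 2 ^ m"
proof -
  have "(\<Sum>k=1..K. ring_sizes m K a k) = ring_sizes m K a K + (\<Sum>k=1..<K. ring_sizes m K a k)"
    using assms(1) by (simp add: atLeastLessThanSuc_atLeastAtMost[symmetric] sum.atLeast_Suc_lessThan)
  also have "(\<Sum>k=1..<K. ring_sizes m K a k) = (\<Sum>k=1..<K. a * k)"
    by (rule sum.cong) (auto simp: ring_sizes_def)
  finally show ?thesis
    using assms by (simp add: ring_sizes_def)
qed

lemma sum_cubes_ge: "real n ^ 4 \<le> 4 * (\<Sum>k=1..n. real k ^ 3)"
proof (induction n)
  case (Suc n)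
  have "real (Suc n) ^ 4 \<le> real n ^ 4 + 4 * real (Suc n) ^ 3"
    by (simp add: power_numeral_reduce algebra_simps)
  then show ?case
    using Suc by simp
qed simp

lemma sum_Ico_ge_square:
  assumes "2 \<le> K"
  shows "real K ^ 2 \<le> 4 * (\<Sum>i=1..<K. real i)"
proof -
  obtain n where n: "K = Suc n" "1 \<le> n"
    using assms by (cases K) auto
  have gauss: "2 * (\<Sum>i=1..<K. real i) = real n * (real n + 1)"
    using double_gauss_sum_from_Suc_0[of n] n(1) by (simp add: atLeastLessThanSuc_atLeastAtMost)
  have "real n + 1 \<le> real n * (real n + 1)"
    using mult_right_mono[of 1 "real n" "real n + 1"] n(2) by simp
  moreover have "real K ^ 2 = real n * (real n + 1) + (real n + 1)"
    using n(1) by (simp add: power2_eq_square algebra_simps)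
  ultimately show ?thesis
    using gauss by linarith
qed

lemma consecutive_gaps_ge:
  fixes f :: "nat \<Rightarrow> real"
  assumes gaps: "\<And>k. k \<in> {1..<K} \<Longrightarrow> g \<le> f (k + 1) - f k" and "0 \<le> g"
    and "1 \<le> j" "j < k" "k \<le> K"
  shows "g \<le> f k - f j"
proof -
  from \<open>j < k\<close> have "Suc j \<le> k"
    by simp
  then show ?thesis
    using \<open>k \<le> K\<close>
  proof (induction k rule: dec_induct)
    case base
    then show ?case
      using gaps[of j] \<open>1 \<le> j\<close> by simp
  next
    case (step n)
    then have "g \<le> f (n + 1) - f n"
      using gaps[of n] \<open>1 \<le> j\<close> by simp
    then show ?case
      using step \<open>0 \<le> g\<close> by simp
  qed
qed

text \<open>The implied constants of the hypotheses; the constants of the conclusion are built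
  from them alone, independently of m.\<close>

locale apsk_constants =
  fixes cK1 cK2 cr1 cr2 g1 g2 cL1 cL2 :: real
  assumes constants_pos: "0 < cK1" "0 < cK2" "0 < cr1" "0 < cr2" "0 < g1" "0 < g2" "0 < cL1" "0 < cL2"
begin

definition sep_const :: real
  where "sep_const = min g1 (min (cr1 * cK1\<^sup>2 / 2) (2 * cr1 / cL2))"

definition near_const :: real
  where "near_const = max g2 (2 * pi * cr2)"

definition energy_lower :: real
  where "energy_lower = min 1 cL1 * cr1\<^sup>2 * cK1 ^ 4 / 4"

definition energy_upper :: real
  where "energy_upper = (cr2 * cK2)\<^sup>2"

lemma sep_const_pos: "0 < sep_const"
  using constants_pos by (simp add: sep_const_def)

lemma near_const_pos: "0 < near_const"
  using constants_pos by (simp add: near_const_def)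

lemma energy_lower_pos: "0 < energy_lower"
  using constants_pos by (simp add: energy_lower_def)

lemma energy_upper_pos: "0 < energy_upper"
  using constants_pos by (simp add: energy_upper_def)

end

locale apsk_design = apsk_constants +
  fixes m K a :: nat and rt phi :: "nat \<Rightarrow> real"
  assumes m_pos: "0 < m"
    and K_lower: "cK1 * sqrt (2 ^ m) \<le> real K"
    and K_upper: "real K \<le> cK2 * sqrt (2 ^ m)"
    and rt_lower: "\<And>k. k \<in> {1..K} \<Longrightarrow> cr1 * real k / sqrt (2 ^ m) \<le> rt k"
    and rt_upper: "\<And>k. k \<in> {1..K} \<Longrightarrow> rt k \<le> cr2 * real k / sqrt (2 ^ m)"
    and gap_lower: "\<And>k. k \<in> {1..<K} \<Longrightarrow> g1 / sqrt (2 ^ m) \<le> rt (k + 1) - rt k"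
    and gap_upper: "\<And>k. k \<in> {1..<K} \<Longrightarrow> rt (k + 1) - rt k \<le> g2 / sqrt (2 ^ m)"
    and a_pos: "0 < a"
    and last_pos: "(\<Sum>i=1..<K. a * i) < 2 ^ m"
    and last_lower: "cL1 * real K \<le> real (ring_sizes m K a K)"
    and last_upper: "real (ring_sizes m K a K) \<le> cL2 * real K"
    and phase: "\<And>k. k \<in> {1..<K} \<Longrightarrow> phi (k + 1) = phi k"
begin

abbreviation "N \<equiv> ring_sizes m K a"
abbreviation "E \<equiv> apsk_E0 m K N rt"
abbreviation "X \<equiv> apsk K N (apsk_radii m K N rt) phi"

lemma K_pos: "0 < K"
proof -
  have "0 < cK1 * sqrt (2 ^ m)"
    using constants_pos by simp
  then show ?thesis
    using K_lower by linarith
qed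

lemma ring_size_ge:
  assumes "k \<in> {1..K}"
  shows "min 1 cL1 * real k \<le> real (N k)"
proof (cases "k < K")
  case True
  have "min 1 cL1 * real k \<le> 1 * real k"
    by (intro mult_right_mono) auto
  also have "\<dots> \<le> real (N k)"
    using True a_pos mult_right_mono[of 1 "real a" "real k"] by (simp add: ring_sizes_def)
  finally show ?thesis .
next
  case False
  then have "k = K"
    using assms by simp
  then show ?thesis
    using last_lower constants_pos mult_right_mono[of "min 1 cL1" cL1 "real K"] by simp
qed

lemma ring_size_pos:
  assumes "k \<in> {1..K}"
  shows "0 < N k"
proof -
  have "0 < min 1 cL1 * real k"
    using assms constants_pos by simp
  then show ?thesis
    using ring_size_ge[OF assms] by linarith
qed

lemma sum_ring_sizes_eq: "(\<Sum>k=1..K. real (N k)) = 2 ^ m"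
  using sum_ring_sizes[of K a m] K_pos last_pos by (simp flip: of_nat_sum)

lemma rt_pos:
  assumes "k \<in> {1..K}"
  shows "0 < rt k"
proof -
  have "0 < cr1 * real k / sqrt (2 ^ m)"
    using assms constants_pos by simp
  then show ?thesis
    using rt_lower[OF assms] by linarith
qed

lemma E0_le: "E \<le> energy_upper"
proof -
  have rt_sq: "(rt k)\<^sup>2 \<le> energy_upper" if k: "k \<in> {1..K}" for k
  proof -
    have "rt k \<le> cr2 * real k / sqrt (2 ^ m)"
      using rt_upper[OF k] .
    also have "\<dots> \<le> cr2 * (real K / sqrt (2 ^ m))"
      using k constants_pos by (simp add: divide_right_mono)
    also have "\<dots> \<le> cr2 * cK2"
      using K_upper constants_pos by (intro mult_left_mono) (auto simp: pos_divide_le_eq)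
    finally show ?thesis
      using rt_pos[OF k] by (simp add: energy_upper_def power_mono)
  qed
  have "(\<Sum>k=1..K. real (N k) * (rt k)\<^sup>2) \<le> (\<Sum>k=1..K. real (N k) * energy_upper)"
    by (intro sum_mono mult_left_mono rt_sq) auto
  also have "\<dots> = energy_upper * (\<Sum>k=1..K. real (N k))"
    by (simp add: sum_distrib_left mult.commute)
  also have "\<dots> = energy_upper * 2 ^ m"
    by (simp only: sum_ring_sizes_eq)
  finally show ?thesis
    by (simp add: apsk_E0_def field_simps)
qed

lemma E0_ge: "energy_lower \<le> E"
proof -
  define c where "c = min 1 cL1"
  have "0 < c"
    using constants_pos by (simp add: c_def)
  have "(cK1 * sqrt (2 ^ m)) ^ 4 \<le> real K ^ 4"
    using K_lower constants_pos by (intro power_mono) auto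
  moreover have "sqrt (2 ^ m :: real) ^ 4 = (2 ^ m)\<^sup>2"
    using power_mult[of "sqrt (2 ^ m :: real)" 2 2] by simp
  then have "(cK1 * sqrt (2 ^ m)) ^ 4 = cK1 ^ 4 * (2 ^ m)\<^sup>2"
    by (simp add: power_mult_distrib)
  ultimately have K4: "cK1 ^ 4 * (2 ^ m)\<^sup>2 \<le> real K ^ 4"
    by simp
  have "energy_lower * 2 ^ m = c * cr1\<^sup>2 / 2 ^ m * (cK1 ^ 4 * (2 ^ m)\<^sup>2 / 4)"
    by (simp add: energy_lower_def c_def power2_eq_square)
  also have "\<dots> \<le> c * cr1\<^sup>2 / 2 ^ m * (\<Sum>k=1..K. real k ^ 3)"
    using K4 sum_cubes_ge[of K] \<open>0 < c\<close> by (intro mult_left_mono) auto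
  also have "\<dots> = (\<Sum>k=1..K. (c * real k) * (cr1 * real k / sqrt (2 ^ m))\<^sup>2)"
    by (simp add: sum_distrib_left power_mult_distrib power_divide power3_eq_cube power2_eq_square
        algebra_simps)
  also have "\<dots> \<le> (\<Sum>k=1..K. real (N k) * (rt k)\<^sup>2)"
    using ring_size_ge rt_lower constants_pos \<open>0 < c\<close>
    by (intro sum_mono mult_mono power_mono) (auto simp: c_def)
  finally show ?thesis
    by (simp add: apsk_E0_def field_simps)
qed

lemma E0_pos: "0 < E"
  using energy_lower_pos E0_ge by linarith

lemma a_cK1_sq_le:
  assumes "2 \<le> K"
  shows "real a * cK1\<^sup>2 \<le> 4"
proof -
  have "real (\<Sum>i=1..<K. a * i) < 2 ^ m"
    using last_pos by (metis of_nat_less_iff of_nat_numeral of_nat_power)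
  then have sum_lt: "real a * (\<Sum>i=1..<K. real i) < 2 ^ m"
    by (simp add: sum_distrib_left)
  have "cK1\<^sup>2 * 2 ^ m = (cK1 * sqrt (2 ^ m))\<^sup>2"
    by (simp add: power_mult_distrib)
  also have "\<dots> \<le> (real K)\<^sup>2"
    using K_lower constants_pos by (intro power_mono) auto
  finally have "real a * (cK1\<^sup>2 * 2 ^ m) \<le> real a * (real K)\<^sup>2"
    by (intro mult_left_mono) auto
  then have "real a * cK1\<^sup>2 * 2 ^ m \<le> real a * (real K)\<^sup>2"
    by (simp add: mult.assoc)
  also have "\<dots> \<le> real a * (4 * (\<Sum>i=1..<K. real i))"
    using sum_Ico_ge_square[OF assms] by (intro mult_left_mono) auto
  also have "\<dots> < 4 * 2 ^ m"
    using sum_lt by linarith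
  finally show ?thesis
    by simp
qed

lemma ring_spacing_ge:
  assumes k: "k \<in> {1..K}"
  shows "sep_const / sqrt (2 ^ m) \<le> 2 * rt k / real (N k)"
proof -
  have Nk: "0 < real (N k)"
    using ring_size_pos[OF k] by simp
  have "sep_const \<le> 2 * cr1 * real k / real (N k)"
  proof (cases "k < K")
    case True
    then have "2 * cr1 * real k / real (N k) = 2 * cr1 / real a"
      using k by (simp add: ring_sizes_def)
    moreover have "cr1 * cK1\<^sup>2 / 2 \<le> 2 * cr1 / real a"
      using a_cK1_sq_le True k a_pos constants_pos by (simp add: field_simps)
    ultimately show ?thesis
      by (simp add: sep_const_def)
  next
    case False
    then have "k = K"
      using k by simp
    then have "2 * cr1 / cL2 \<le> 2 * cr1 * real k / real (N k)"
      using last_upper Nk constants_pos by (simp add: field_simps)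
    then show ?thesis
      by (simp add: sep_const_def)
  qed
  then have "sep_const / sqrt (2 ^ m) \<le> 2 * (cr1 * real k / sqrt (2 ^ m)) / real (N k)"
    by (simp add: divide_right_mono field_simps)
  also have "\<dots> \<le> 2 * rt k / real (N k)"
    using rt_lower[OF k] Nk by (intro divide_right_mono mult_left_mono) auto
  finally show ?thesis .
qed

lemma rt_sep_ge:
  assumes "j \<in> {1..K}" "k \<in> {1..K}" "j \<noteq> k"
  shows "sep_const / sqrt (2 ^ m) \<le> \<bar>rt j - rt k\<bar>"
proof -
  have increasing: "g1 / sqrt (2 ^ m) \<le> rt k' - rt j'"
    if "j' \<in> {1..K}" "k' \<in> {1..K}" "j' < k'" for j' k'
    using that constants_pos by (intro consecutive_gaps_ge[of K _ rt, OF gap_lower]) auto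
  have "g1 / sqrt (2 ^ m) \<le> \<bar>rt j - rt k\<bar>"
    using increasing[of j k] increasing[of k j] assms by (cases "j < k") auto
  moreover have "sep_const \<le> g1"
    by (simp add: sep_const_def)
  then have "sep_const / sqrt (2 ^ m) \<le> g1 / sqrt (2 ^ m)"
    by (simp add: divide_right_mono)
  ultimately show ?thesis
    by linarith
qed

lemma apsk_dist_ge_sep:
  assumes "x \<in> X" "y \<in> X" "x \<noteq> y"
  shows "sep_const / (sqrt (2 ^ m) * sqrt E) \<le> cmod (x - y)"
proof (rule apsk_dist_ge[OF assms])
  have sqrtE: "0 < sqrt E"
    using E0_pos by simp
  show "0 \<le> apsk_radii m K N rt k" if "k \<in> {1..K}" for k
    using rt_pos[OF that] sqrtE by (simp add: apsk_radii_def)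
  show "sep_const / (sqrt (2 ^ m) * sqrt E) \<le> \<bar>apsk_radii m K N rt j - apsk_radii m K N rt k\<bar>"
    if "j \<in> {1..K}" "k \<in> {1..K}" "j \<noteq> k" for j k
  proof -
    have "sep_const / sqrt (2 ^ m) / sqrt E \<le> \<bar>rt j - rt k\<bar> / sqrt E"
      using rt_sep_ge[OF that] sqrtE by (intro divide_right_mono) auto
    also have "\<dots> = \<bar>apsk_radii m K N rt j - apsk_radii m K N rt k\<bar>"
      using sqrtE by (simp add: apsk_radii_def abs_divide flip: diff_divide_distrib)
    finally show ?thesis
      by simp
  qed
  show "sep_const / (sqrt (2 ^ m) * sqrt E) \<le> 2 * apsk_radii m K N rt k / real (N k)"
    if "k \<in> {1..K}" for k
  proof -
    have "sep_const / sqrt (2 ^ m) / sqrt E \<le> 2 * rt k / real (N k) / sqrt E"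
      using ring_spacing_ge[OF that] sqrtE by (intro divide_right_mono) auto
    also have "\<dots> = 2 * apsk_radii m K N rt k / real (N k)"
      by (simp add: apsk_radii_def)
    finally show ?thesis
      by simp
  qed
qed

lemma close_pair_adjacent_rings:
  assumes "2 \<le> K"
  shows "\<exists>x\<in>X. \<exists>y\<in>X. x \<noteq> y \<and> cmod (x - y) \<le> g2 / (sqrt (2 ^ m) * sqrt E)"
proof -
  have "1 \<in> {1..<K}"
    using assms by simp
  then have aligned: "phi 2 = phi 1" and gap: "g1 / sqrt (2 ^ m) \<le> rt 2 - rt 1" "rt 2 - rt 1 \<le> g2 / sqrt (2 ^ m)"
    using phase gap_lower gap_upper by (simp_all add: numeral_2_eq_2)
  have sqrtE: "0 < sqrt E"
    using E0_pos by simp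
  define x where "x = of_real (apsk_radii m K N rt 1) * cis (phi 1)"
  define y where "y = of_real (apsk_radii m K N rt 2) * cis (phi 2)"
  have "x \<in> X" "y \<in> X"
    using assms ring_size_pos[of 1] ring_size_pos[of 2] unfolding mem_apsk x_def y_def
    by (intro bexI[of _ 1] bexI[of _ 2] exI[of _ 0]; simp)+
  have "0 < g1 / sqrt (2 ^ m)"
    using constants_pos by simp
  then have rt_increase: "0 < rt 2 - rt 1"
    using gap(1) by linarith
  have "cmod (x - y) = \<bar>apsk_radii m K N rt 1 - apsk_radii m K N rt 2\<bar>"
    unfolding x_def y_def aligned by (simp add: norm_mult flip: left_diff_distrib of_real_diff)
  also have "\<dots> = (rt 2 - rt 1) / sqrt E"
    using rt_increase sqrtE by (simp add: apsk_radii_def abs_divide flip: diff_divide_distrib)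
  finally have dist: "cmod (x - y) = (rt 2 - rt 1) / sqrt E" .
  then have "x \<noteq> y"
    using rt_increase sqrtE by auto
  moreover have "cmod (x - y) \<le> g2 / (sqrt (2 ^ m) * sqrt E)"
    using dist divide_right_mono[OF gap(2), of "sqrt E"] sqrtE by simp
  ultimately show ?thesis
    using \<open>x \<in> X\<close> \<open>y \<in> X\<close> by blast
qed

lemma close_pair_single_ring:
  assumes "K = 1"
  shows "\<exists>x\<in>X. \<exists>y\<in>X. x \<noteq> y \<and> cmod (x - y) \<le> 2 * pi * cr2 / (sqrt (2 ^ m) * sqrt E)"
proof -
  have N1: "N 1 = 2 ^ m"
    using assms by (simp add: ring_sizes_def)
  then have N1_ge: "2 \<le> N 1"
    using m_pos by (simp add: self_le_power)
  have sqrtE: "0 < sqrt E"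
    using E0_pos by simp
  define \<rho> where "\<rho> = apsk_radii m K N rt 1"
  have \<rho>_pos: "0 < \<rho>"
    using rt_pos[of 1] assms sqrtE by (simp add: \<rho>_def apsk_radii_def)
  have \<rho>_le: "\<rho> \<le> cr2 / (sqrt (2 ^ m) * sqrt E)"
    using rt_upper[of 1] assms sqrtE
    by (simp add: \<rho>_def apsk_radii_def divide_right_mono flip: divide_divide_eq_left)
  define x where "x = of_real \<rho> * cis (phi 1 + 2 * pi * real 0 / real (N 1))"
  define y where "y = of_real \<rho> * cis (phi 1 + 2 * pi * real 1 / real (N 1))"
  have "x \<in> X" "y \<in> X"
    using assms N1_ge unfolding mem_apsk x_def y_def \<rho>_def
    by (intro bexI[of _ 1] exI[of _ 0] exI[of _ 1]; simp)+
  have "0 < 2 * \<bar>\<rho>\<bar> / real (N 1)"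
    using \<rho>_pos N1_ge by simp
  also have "\<dots> \<le> cmod (x - y)"
    unfolding x_def y_def using N1_ge by (intro ring_chord_ge) auto
  finally have "x \<noteq> y"
    by auto
  have "cmod (x - y) = \<rho> * cmod (cis (phi 1) - cis (phi 1 + 2 * pi / 2 ^ m))"
    using \<rho>_pos by (simp add: x_def y_def N1[unfolded One_nat_def] norm_mult flip: right_diff_distrib)
  also have "\<dots> \<le> \<rho> * (2 * pi / 2 ^ m)"
    using norm_cis_diff_le[of "phi 1" "phi 1 + 2 * pi / 2 ^ m"] \<rho>_pos
    by (intro mult_left_mono) auto
  also have "\<dots> \<le> \<rho> * (2 * pi)"
    using \<rho>_pos by (intro mult_left_mono) (auto simp: field_simps)
  also have "\<dots> \<le> cr2 / (sqrt (2 ^ m) * sqrt E) * (2 * pi)"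
    using \<rho>_le by (intro mult_right_mono) auto
  also have "\<dots> = 2 * pi * cr2 / (sqrt (2 ^ m) * sqrt E)"
    by simp
  finally show ?thesis
    using \<open>x \<in> X\<close> \<open>y \<in> X\<close> \<open>x \<noteq> y\<close> by blast
qed

lemma close_pair: "\<exists>x\<in>X. \<exists>y\<in>X. x \<noteq> y \<and> cmod (x - y) \<le> near_const / (sqrt (2 ^ m) * sqrt E)"
proof -
  have "0 < sqrt (2 ^ m) * sqrt E"
    using E0_pos by simp
  then have "g2 / (sqrt (2 ^ m) * sqrt E) \<le> near_const / (sqrt (2 ^ m) * sqrt E)"
    and "2 * pi * cr2 / (sqrt (2 ^ m) * sqrt E) \<le> near_const / (sqrt (2 ^ m) * sqrt E)"
    by (simp_all add: near_const_def divide_right_mono)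
  moreover have "K = 1 \<or> 2 \<le> K"
    using K_pos by linarith
  ultimately show ?thesis
    using close_pair_single_ring close_pair_adjacent_rings by (meson order_trans)
qed

lemma dmin_sq_bounds:
  "sep_const\<^sup>2 / energy_upper / 2 ^ m \<le> (dmin X)\<^sup>2 \<and> (dmin X)\<^sup>2 \<le> near_const\<^sup>2 / energy_lower / 2 ^ m"
proof -
  obtain x y where "x \<in> X" "y \<in> X" "x \<noteq> y"
    and close: "cmod (x - y) \<le> near_const / (sqrt (2 ^ m) * sqrt E)"
    using close_pair by blast
  then have lower: "sep_const / (sqrt (2 ^ m) * sqrt E) \<le> dmin X"
    and upper: "dmin X \<le> near_const / (sqrt (2 ^ m) * sqrt E)"
    using dmin_bounds[of x X y] apsk_dist_ge_sep by (blast, fastforce)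
  have "sep_const\<^sup>2 / energy_upper / 2 ^ m \<le> sep_const\<^sup>2 / E / 2 ^ m"
    using E0_le E0_pos by (intro divide_right_mono divide_left_mono) auto
  also have "\<dots> = (sep_const / (sqrt (2 ^ m) * sqrt E))\<^sup>2"
    using E0_pos by (simp add: power_divide power_mult_distrib)
  also have "\<dots> \<le> (dmin X)\<^sup>2"
    using lower sep_const_pos E0_pos by (intro power_mono) auto
  finally have lower_sq: "sep_const\<^sup>2 / energy_upper / 2 ^ m \<le> (dmin X)\<^sup>2" .
  have "0 \<le> sep_const / (sqrt (2 ^ m) * sqrt E)"
    using sep_const_pos E0_pos by simp
  then have "(dmin X)\<^sup>2 \<le> (near_const / (sqrt (2 ^ m) * sqrt E))\<^sup>2"
    using lower upper by (intro power_mono) auto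
  also have "\<dots> = near_const\<^sup>2 / E / 2 ^ m"
    using E0_pos by (simp add: power_divide power_mult_distrib)
  also have "\<dots> \<le> near_const\<^sup>2 / energy_lower / 2 ^ m"
    using E0_ge energy_lower_pos by (intro divide_right_mono divide_left_mono) auto
  finally show ?thesis
    using lower_sq by simp
qed

end

theorem proposition1:
  fixes K :: "nat \<Rightarrow> nat" and a :: "nat \<Rightarrow> nat"
    and rt :: "nat \<Rightarrow> nat \<Rightarrow> real" and phi :: "nat \<Rightarrow> nat \<Rightarrow> real"
  assumes K_Theta: "\<exists>c1 c2. 0 < c1 \<and> 0 < c2 \<and> (\<forall>m\<ge>2.
             c1 * sqrt (2 ^ m) \<le> real (K m) \<and> real (K m) \<le> c2 * sqrt (2 ^ m))"
    and rt_Theta: "\<exists>c1 c2. 0 < c1 \<and> 0 < c2 \<and> (\<forall>m\<ge>2. \<forall>k\<in>{1..K m}.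
             c1 * real k / sqrt (2 ^ m) \<le> rt m k \<and> rt m k \<le> c2 * real k / sqrt (2 ^ m))"
    and gap_Theta: "\<exists>c1 c2. 0 < c1 \<and> 0 < c2 \<and> (\<forall>m\<ge>2. \<forall>k\<in>{1..<K m}.
             c1 / sqrt (2 ^ m) \<le> rt m (k + 1) - rt m k \<and> rt m (k + 1) - rt m k \<le> c2 / sqrt (2 ^ m))"
    and a_pos: "\<forall>m\<ge>2. 0 < a m"
    and last_pos: "\<forall>m\<ge>2. (\<Sum>i=1..<K m. a m * i) < 2 ^ m"
    and last_Theta: "\<exists>c1 c2. 0 < c1 \<and> 0 < c2 \<and> (\<forall>m\<ge>2.
             c1 * real (K m) \<le> real (ring_sizes m (K m) (a m) (K m)) \<and>
             real (ring_sizes m (K m) (a m) (K m)) \<le> c2 * real (K m))"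
    and phase: "\<forall>m\<ge>2. \<forall>k\<in>{1..<K m}. phi m (k + 1) - phi m k = 0"
  shows "\<exists>c1 c2. 0 < c1 \<and> 0 < c2 \<and> (\<forall>m\<ge>2.
           c1 / 2 ^ m \<le> (dmin (apsk (K m) (ring_sizes m (K m) (a m))
                                  (apsk_radii m (K m) (ring_sizes m (K m) (a m)) (rt m)) (phi m)))\<^sup>2 \<and>
           (dmin (apsk (K m) (ring_sizes m (K m) (a m))
                   (apsk_radii m (K m) (ring_sizes m (K m) (a m)) (rt m)) (phi m)))\<^sup>2 \<le> c2 / 2 ^ m)"
proof -
  obtain cK1 cK2 where cK: "0 < cK1" "0 < cK2" "\<forall>m\<ge>2.
      cK1 * sqrt (2 ^ m) \<le> real (K m) \<and> real (K m) \<le> cK2 * sqrt (2 ^ m)"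
    using K_Theta by blast
  obtain cr1 cr2 where cr: "0 < cr1" "0 < cr2" "\<forall>m\<ge>2. \<forall>k\<in>{1..K m}.
      cr1 * real k / sqrt (2 ^ m) \<le> rt m k \<and> rt m k \<le> cr2 * real k / sqrt (2 ^ m)"
    using rt_Theta by blast
  obtain g1 g2 where g: "0 < g1" "0 < g2" "\<forall>m\<ge>2. \<forall>k\<in>{1..<K m}.
      g1 / sqrt (2 ^ m) \<le> rt m (k + 1) - rt m k \<and> rt m (k + 1) - rt m k \<le> g2 / sqrt (2 ^ m)"
    using gap_Theta by blast
  obtain cL1 cL2 where cL: "0 < cL1" "0 < cL2" "\<forall>m\<ge>2.
      cL1 * real (K m) \<le> real (ring_sizes m (K m) (a m) (K m)) \<and>
      real (ring_sizes m (K m) (a m) (K m)) \<le> cL2 * real (K m)"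
    using last_Theta by blast
  interpret apsk_constants cK1 cK2 cr1 cr2 g1 g2 cL1 cL2
    using cK cr g cL by unfold_locales
  have pos: "0 < sep_const\<^sup>2 / energy_upper" "0 < near_const\<^sup>2 / energy_lower"
    using sep_const_pos energy_upper_pos near_const_pos energy_lower_pos by simp_all
  show ?thesis
  proof (rule exI[of _ "sep_const\<^sup>2 / energy_upper"], rule exI[of _ "near_const\<^sup>2 / energy_lower"],
      intro conjI[OF pos(1) conjI[OF pos(2)]] allI impI, goal_cases)
    case (1 m)
    interpret apsk_design cK1 cK2 cr1 cr2 g1 g2 cL1 cL2 m "K m" "a m" "rt m" "phi m"
      using 1 cK(3) cr(3) g(3) cL(3) a_pos last_pos phase by unfold_locales auto
    show ?case
      by (rule dmin_sq_bounds)
  qed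
qed

end
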